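(* Let $\mu>0$, let $a\in\left(-\frac{2\mu}{9},0\right)\cup\left(0,\frac{4\mu}{9}\right)$ be real and $s_1\in\left[\frac{2\mu}{3},\infty\right)$. Define $$F(\tilde z;s_1,a)=\frac{H(\tilde z;s_1,a)}{\beta_1(a,s_1)},\quad H(\tilde z;s_1,a)=\frac{27a^2\tilde z\,(2s_1-3a)}{27a^3\tilde z-27a^2\tilde z\,s_1-(\tilde z-1)^2s_1^3},\quad \beta_1(a,s_1)=\frac{27a^2}{s_1^3}(3a-2s_1).$$ Then for all $|\tilde z|<1$, $$\frac{|\tilde z|}{(1+|\tilde z|)^2}\le\left|F(\tilde z;s_1,a)\right|\le\frac{|\tilde z|}{(1-|\tilde z|)^2}.$$ *)

theory Defs
  imports "HOL-Analysis.Analysis"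
begin

definition H_fun :: "complex \<Rightarrow> real \<Rightarrow> real \<Rightarrow> complex" where
  "H_fun z s1 a =
     (27 * of_real a ^ 2 * z * (2 * of_real s1 - 3 * of_real a)) /
     (27 * of_real a ^ 3 * z - 27 * of_real a ^ 2 * z * of_real s1 - (z - 1) ^ 2 * of_real s1 ^ 3)"

definition beta1 :: "real \<Rightarrow> real \<Rightarrow> real" where
  "beta1 a s1 = 27 * a ^ 2 / s1 ^ 3 * (3 * a - 2 * s1)"

definition F_fun :: "complex \<Rightarrow> real \<Rightarrow> real \<Rightarrow> complex" where
  "F_fun z s1 a = H_fun z s1 a / of_real (beta1 a s1)"

end

theory Submission
  imports Defs
begin

text \<open>
  After cancelling, F(z) = z / (z^2 - b z + 1) with b = 2 - 27 a^2 (s1 - a) / s1^3, and the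
  hypotheses give 0 \<le> 2 - b \<le> 4 because 4 s1^3 - 27 a^2 (s1 - a) = (3a + s1) (3a - 2 s1)^2.
  For |b| \<le> 2 the roots of z^2 - b z + 1 are a conjugate pair w, cnj w on the unit circle,
  so for |z| < 1 each factor |z - w| lies between 1 - |z| and 1 + |z|, which yields the
  Koebe-type bounds.
\<close>

lemma quadratic_unit_circle_roots:
  fixes b :: real
  assumes "\<bar>b\<bar> \<le> 2"
  obtains w :: complex where "norm w = 1"
    and "\<And>z. z\<^sup>2 - of_real b * z + 1 = (z - w) * (z - cnj w)"
proof
  define w where "w = Complex (b / 2) (sqrt (1 - b\<^sup>2 / 4))"
  have "b\<^sup>2 \<le> 2\<^sup>2"
    using assms by (metis abs_le_square_iff abs_numeral)
  then have sqrt_sq: "(sqrt (1 - b\<^sup>2 / 4))\<^sup>2 = 1 - b\<^sup>2 / 4"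
    by (intro real_sqrt_pow2) simp
  then show "norm w = 1"
    unfolding w_def cmod_def by (simp add: power_divide)
  have "w * cnj w = 1" "w + cnj w = of_real b"
    using sqrt_sq by (simp_all add: w_def complex_eq_iff power2_eq_square)
  moreover have "(z - w) * (z - cnj w) = z\<^sup>2 - (w + cnj w) * z + w * cnj w" for z
    by (simp add: algebra_simps power2_eq_square)
  ultimately show "z\<^sup>2 - of_real b * z + 1 = (z - w) * (z - cnj w)" for z
    by simp
qed

lemma norm_diff_unit_bounds:
  fixes z w :: complex
  assumes "norm w = 1"
  shows "1 - norm z \<le> norm (z - w)" and "norm (z - w) \<le> 1 + norm z"
  using norm_triangle_ineq2[of w z] norm_triangle_ineq4[of z w] assms
  by (simp_all add: norm_minus_commute)

lemma norm_quadratic_unit_roots_bounds: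
  fixes b :: real and z :: complex
  assumes "\<bar>b\<bar> \<le> 2" and "norm z < 1"
  shows "(1 - norm z)\<^sup>2 \<le> norm (z\<^sup>2 - of_real b * z + 1)"
    and "norm (z\<^sup>2 - of_real b * z + 1) \<le> (1 + norm z)\<^sup>2"
proof -
  obtain w where "norm w = 1" and factor: "z\<^sup>2 - of_real b * z + 1 = (z - w) * (z - cnj w)"
    using quadratic_unit_circle_roots[OF assms(1)] by metis
  then have "norm (cnj w) = 1" by simp
  have norm_factor: "norm (z\<^sup>2 - of_real b * z + 1) = norm (z - w) * norm (z - cnj w)"
    by (simp add: factor norm_mult)
  note bounds = norm_diff_unit_bounds[OF \<open>norm w = 1\<close>, of z]
    norm_diff_unit_bounds[OF \<open>norm (cnj w) = 1\<close>, of z]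
  show "(1 - norm z)\<^sup>2 \<le> norm (z\<^sup>2 - of_real b * z + 1)"
    unfolding norm_factor power2_eq_square[of "1 - norm z"]
    using bounds assms(2) by (intro mult_mono) auto
  show "norm (z\<^sup>2 - of_real b * z + 1) \<le> (1 + norm z)\<^sup>2"
    unfolding norm_factor power2_eq_square[of "1 + norm z"]
    using bounds by (intro mult_mono) auto
qed

lemma norm_div_quadratic_unit_roots_bounds:
  fixes b :: real and z :: complex
  assumes "\<bar>b\<bar> \<le> 2" and "norm z < 1"
  shows "norm z / (1 + norm z)\<^sup>2 \<le> norm (z / (z\<^sup>2 - of_real b * z + 1))"
    and "norm (z / (z\<^sup>2 - of_real b * z + 1)) \<le> norm z / (1 - norm z)\<^sup>2"
proof -
  let ?q = "z\<^sup>2 - of_real b * z + 1"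
  note q_bounds = norm_quadratic_unit_roots_bounds[OF assms]
  have "(1 - norm z)\<^sup>2 > 0"
    using assms(2) by simp
  then have "norm ?q > 0"
    using q_bounds(1) by linarith
  then show "norm z / (1 + norm z)\<^sup>2 \<le> norm (z / ?q)"
    and "norm (z / ?q) \<le> norm z / (1 - norm z)\<^sup>2"
    using q_bounds \<open>(1 - norm z)\<^sup>2 > 0\<close>
    by (simp_all add: norm_divide frac_le)
qed

lemma F_fun_eq_div_quadratic:
  assumes "s1 \<noteq> 0" and "a \<noteq> 0" and "3 * a \<noteq> 2 * s1"
  shows "F_fun z s1 a = z / (z\<^sup>2 - of_real (2 - 27 * a\<^sup>2 * (s1 - a) / s1 ^ 3) * z + 1)"
proof -
  define k where "k = 27 * a\<^sup>2 * (2 * s1 - 3 * a)"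
  define q where "q = z\<^sup>2 - of_real (2 - 27 * a\<^sup>2 * (s1 - a) / s1 ^ 3) * z + 1"
  have "k \<noteq> 0"
    unfolding k_def using assms by simp
  have numerator: "27 * of_real a ^ 2 * z * (2 * of_real s1 - 3 * of_real a) = of_real k * z"
    unfolding k_def by (simp add: algebra_simps)
  have denominator: "27 * of_real a ^ 3 * z - 27 * of_real a ^ 2 * z * of_real s1
      - (z - 1) ^ 2 * of_real s1 ^ 3 = - (of_real s1 ^ 3 * q)"
    unfolding q_def using assms(1)
    by (simp add: field_simps power2_eq_square power3_eq_cube)
  have beta: "complex_of_real (beta1 a s1) = - of_real k / of_real s1 ^ 3"
    unfolding beta1_def k_def by (simp add: algebra_simps)
  show ?thesis
    unfolding F_fun_def H_fun_def numerator denominator beta q_def[symmetric]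
    using \<open>k \<noteq> 0\<close> assms(1) by (simp add: divide_simps)
qed

lemma abs_two_minus_cubic_ratio_le_2:
  fixes a s1 :: real
  assumes "s1 > 0" and "- s1 / 3 \<le> a" and "a \<le> s1"
  shows "\<bar>2 - 27 * a\<^sup>2 * (s1 - a) / s1 ^ 3\<bar> \<le> 2"
proof -
  have "0 \<le> 27 * a\<^sup>2 * (s1 - a)"
    using assms(3) by simp
  moreover have "4 * s1 ^ 3 - 27 * a\<^sup>2 * (s1 - a) = (3 * a + s1) * (3 * a - 2 * s1)\<^sup>2"
    by (simp add: power2_eq_square power3_eq_cube algebra_simps)
  moreover have "0 \<le> (3 * a + s1) * (3 * a - 2 * s1)\<^sup>2"
    using assms(2) by simp
  ultimately have "0 \<le> 27 * a\<^sup>2 * (s1 - a) / s1 ^ 3" and "27 * a\<^sup>2 * (s1 - a) / s1 ^ 3 \<le> 4"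
    using assms(1) by (simp_all add: divide_le_eq)
  then show ?thesis
    by linarith
qed

theorem corollary2:
  fixes \<mu> a s1 :: real and z :: complex
  assumes "\<mu> > 0"
    and "a \<in> {-(2 * \<mu> / 9)<..<0} \<union> {0<..<4 * \<mu> / 9}"
    and "s1 \<ge> 2 * \<mu> / 3"
    and "norm z < 1"
  shows "norm z / (1 + norm z) ^ 2 \<le> norm (F_fun z s1 a)
       \<and> norm (F_fun z s1 a) \<le> norm z / (1 - norm z) ^ 2"
proof -
  have "s1 > 0" "a \<noteq> 0" "- s1 / 3 < a" "a < 2 * s1 / 3"
    using assms(1-3) by auto
  then have F_eq: "F_fun z s1 a = z / (z\<^sup>2 - of_real (2 - 27 * a\<^sup>2 * (s1 - a) / s1 ^ 3) * z + 1)"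
    and coefficient_bound: "\<bar>2 - 27 * a\<^sup>2 * (s1 - a) / s1 ^ 3\<bar> \<le> 2"
    by (simp_all add: F_fun_eq_div_quadratic abs_two_minus_cubic_ratio_le_2)
  show ?thesis
    unfolding F_eq using norm_div_quadratic_unit_roots_bounds[OF coefficient_bound assms(4)]
    by blast
qed

end
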